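(* Let $b:\mathbb R\to\mathbb R$ be a function (bottom topography). Let $\rho,p,u,x,\check B$ be grid functions satisfying the scheme (M) at every node, where either $b$ is constant and $\check B\equiv0$, or $u+\check u\neq0$ at every node and $$\check B=\frac{b(\hat x)-b(\check x)}{\tau\,(u+\check u)}.$$ Then at every node the discrete energy conservation law $$\Big(\frac{u^2}{2}+\frac{p}{2\sqrt p-\rho}+\frac{\alpha^2(2\sqrt p-\rho)}{2p\rho}-\frac{b(\hat x)+b(x)}{2}\Big)_{\check t}+\Big(\frac{u^++\check u^+}{2}\,Q\Big)_{\bar s}=0$$ holds.
   Context: Fix mesh steps $\tau>0$, $h>0$ and a constant $\alpha\in\mathbb R$. A grid function is a real-valued function $f=f(t,s)$ on the uniform orthogonal mesh $\{(n\tau,kh): n,k\in\mathbb Z\}$. Shifts: $\hat f=f(t+\tau,s)$, $\check f=f(t-\tau,s)$, $f^+=f_+=f(t,s+h)$, $f^-=f_-=f(t,s-h)$; a shift applied to a composite expression shifts the whole expression (e.g. $\check u_s$ is $u_s$ at $(t-\tau,s)$, $\check u^+$ is $u$ at $(t-\tau,s+h)$). Differences: $f_t=(\hat f-f)/\tau$, $f_{\check t}=(f-\check f)/\tau$, $f_s=(f_+-f)/h$, $f_{\bar s}=(f-f_-)/h$. Let $\rho>0$, $p>0$, $u$, $x$, $\check B$ be grid functions, and set $$Q=\Big(\frac{4}{\rho\check\rho}-\frac{2}{\sqrt p}\Big(\frac1\rho+\frac1{\check\rho}\Big)+\frac1p\Big)^{-1}-\frac{\alpha^2}{\sqrt p}$$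 (the bracket being assumed nonzero). The scheme (M) (shallow water MHD in mass Lagrangian coordinates) is the requirement that at every node $$\rho_{\check t}+\tfrac12\rho\check\rho\,(u_s+\check u_s)=0,\quad u_{\check t}+Q_{\bar s}-\check B=0,\quad x_t=u,\quad \check x_s+x_s=\frac{1}{\sqrt{\check p}}+\frac1{\sqrt p}=\frac{2}{\check\rho}.$$ *)

theory Defs
  imports Complex_Main
begin

text \<open>Grid functions: f n k is the value at the node (n tau, k h), n,k integers.\<close>
type_synonym grid = "int \<Rightarrow> int \<Rightarrow> real"

definition dt :: "real \<Rightarrow> grid \<Rightarrow> grid" where
  "dt \<tau> f n k = (f (n+1) k - f n k) / \<tau>"
definition dtb :: "real \<Rightarrow> grid \<Rightarrow> grid" where
  "dtb \<tau> f n k = (f n k - f (n-1) k) / \<tau>"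
definition ds :: "real \<Rightarrow> grid \<Rightarrow> grid" where
  "ds h f n k = (f n (k+1) - f n k) / h"
definition dsb :: "real \<Rightarrow> grid \<Rightarrow> grid" where
  "dsb h f n k = (f n k - f n (k-1)) / h"
definition tfwd :: "grid \<Rightarrow> grid" where
  "tfwd f n k = f (n+1) k"
definition tbck :: "grid \<Rightarrow> grid" where
  "tbck f n k = f (n-1) k"
definition sfwd :: "grid \<Rightarrow> grid" where
  "sfwd f n k = f n (k+1)"

definition Qbr :: "grid \<Rightarrow> grid \<Rightarrow> grid" where
  "Qbr \<rho> p n k = 4 / (\<rho> n k * tbck \<rho> n k)
     - 2 / sqrt (p n k) * (1 / \<rho> n k + 1 / tbck \<rho> n k) + 1 / p n k"

definition Qf :: "real \<Rightarrow> grid \<Rightarrow> grid \<Rightarrow> grid" where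
  "Qf \<alpha> \<rho> p n k = inverse (Qbr \<rho> p n k) - \<alpha>\<^sup>2 / sqrt (p n k)"

definition schemeM :: "real \<Rightarrow> real \<Rightarrow> real \<Rightarrow> grid \<Rightarrow> grid \<Rightarrow> grid \<Rightarrow> grid \<Rightarrow> grid \<Rightarrow> bool" where
  "schemeM \<tau> h \<alpha> \<rho> p u x Bc \<longleftrightarrow> (\<forall>n k.
      dtb \<tau> \<rho> n k + 1/2 * \<rho> n k * tbck \<rho> n k * (ds h u n k + tbck (ds h u) n k) = 0
    \<and> dtb \<tau> u n k + dsb h (Qf \<alpha> \<rho> p) n k - Bc n k = 0
    \<and> dt \<tau> x n k = u n k
    \<and> tbck (ds h x) n k + ds h x n k = 1 / sqrt (tbck p n k) + 1 / sqrt (p n k)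
    \<and> 1 / sqrt (tbck p n k) + 1 / sqrt (p n k) = 2 / tbck \<rho> n k)"

definition energy :: "real \<Rightarrow> (real \<Rightarrow> real) \<Rightarrow> grid \<Rightarrow> grid \<Rightarrow> grid \<Rightarrow> grid \<Rightarrow> grid" where
  "energy \<alpha> b \<rho> p u x n k = (u n k)\<^sup>2 / 2 + p n k / (2 * sqrt (p n k) - \<rho> n k)
     + \<alpha>\<^sup>2 * (2 * sqrt (p n k) - \<rho> n k) / (2 * p n k * \<rho> n k)
     - (b (tfwd x n k) + b (x n k)) / 2"

definition eflux :: "real \<Rightarrow> grid \<Rightarrow> grid \<Rightarrow> grid \<Rightarrow> grid" where
  "eflux \<alpha> \<rho> p u n k = (sfwd u n k + sfwd (tbck u) n k) / 2 * Qf \<alpha> \<rho> p n k"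

end

theory Submission
  imports Defs
begin

text \<open>Write \<open>s\<^sub>0, s\<^sub>1, s\<^sub>2\<close> for \<open>sqrt p\<close> at the time levels \<open>n-1, n, n+1\<close> and \<open>\<rho>\<^sub>0, \<rho>\<^sub>1\<close>
  for \<open>\<rho>\<close> at levels \<open>n-1, n\<close>. The last relation of (M) makes \<open>\<rho>\<^sub>0\<close> the harmonic mean of
  \<open>s\<^sub>0, s\<^sub>1\<close> and \<open>\<rho>\<^sub>1\<close> that of \<open>s\<^sub>1, s\<^sub>2\<close>. Then the bracket in \<open>Q\<close> factors as
  \<open>(2/\<rho>\<^sub>1 - 1/s\<^sub>1)(2/\<rho>\<^sub>0 - 1/s\<^sub>1) = 1/(s\<^sub>0 s\<^sub>2)\<close>, so \<open>Q = s\<^sub>0 s\<^sub>2 - \<alpha>\<^sup>2/s\<^sub>1\<close>,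
  and the energy density becomes \<open>u\<^sup>2/2 + (s\<^sub>1 + s\<^sub>2)/2 + \<alpha>\<^sup>2/(2 s\<^sub>1 s\<^sub>2) - (b(x\<^sub>n\<^sub>+\<^sub>1) + b(x\<^sub>n))/2\<close>.
  The mass equation expresses the spatial jump of \<open>u\<^sub>n + u\<^sub>n\<^sub>-\<^sub>1\<close> by \<open>h (1/s\<^sub>2 - 1/s\<^sub>0)/\<tau>\<close>;
  multiplying the momentum equation by \<open>(u\<^sub>n + u\<^sub>n\<^sub>-\<^sub>1)/2\<close> then makes the kinetic, pressure
  and bottom terms telescope.\<close>

lemma harmonic_bracket_eq:
  fixes r0 r1 s0 s1 s2 :: real
  assumes "2/r1 = 1/s1 + 1/s2" "2/r0 = 1/s0 + 1/s1"
  shows "4/(r1*r0) - 2/s1*(1/r1 + 1/r0) + 1/s1\<^sup>2 = 1/(s0*s2)"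
proof -
  have "4/(r1*r0) - 2/s1*(1/r1 + 1/r0) + 1/s1\<^sup>2 = (2/r1 - 1/s1) * (2/r0 - 1/s1)"
    by (simp add: algebra_simps power2_eq_square)
  also have "\<dots> = 1/(s0*s2)" using assms by simp
  finally show ?thesis .
qed

lemma mass_scheme_velocity_jump:
  fixes r0 r1 s0 s1 s2 \<tau> h du :: real
  assumes "r0 \<noteq> 0" "r1 \<noteq> 0" "\<tau> \<noteq> 0" "h \<noteq> 0"
    and "2/r1 = 1/s1 + 1/s2" "2/r0 = 1/s0 + 1/s1"
    and "(r1 - r0)/\<tau> + 1/2*r1*r0*(du/h) = 0"
  shows "du = h*(1/s2 - 1/s0)/\<tau>"
proof -
  have "(2/r0 - 2/r1)/\<tau> + du/h = 0"
    using assms(1-4,7) by (simp add: field_simps)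
  then show ?thesis using assms(3-6) by (simp add: field_simps)
qed

lemma pressure_energy_eq:
  fixes r s t a :: real
  assumes "s > 0" "t > 0" "2/r = 1/s + 1/t"
  shows "s\<^sup>2/(2*s - r) + a\<^sup>2*(2*s - r)/(2*s\<^sup>2*r) = (s+t)/2 + a\<^sup>2/(2*s*t)"
proof -
  have "0 < 1/s + 1/t" using assms(1,2) by (simp add: add_pos_pos)
  then have "r \<noteq> 0" using assms(3) by auto
  then have key: "2*s - r = s*r/t" using assms by (simp add: field_simps)
  have "s\<^sup>2/(2*s - r) = s*t/r" using assms \<open>r \<noteq> 0\<close> by (simp add: key power2_eq_square)
  also have "\<dots> = (s+t)/2" using assms by (simp add: field_simps)
  finally have "s\<^sup>2/(2*s - r) = (s+t)/2" .
  moreover have "a\<^sup>2*(2*s - r)/(2*s\<^sup>2*r) = a\<^sup>2/(2*s*t)"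
    using assms \<open>r \<noteq> 0\<close> by (simp add: key power2_eq_square)
  ultimately show ?thesis by simp
qed

lemma discrete_energy_balance:
  fixes s0 s1 s2 u0 u1 u0p u1p Q Qm a \<tau> h B bh bm bc :: real
  assumes "s0 > 0" "s1 > 0" "s2 > 0" "\<tau> > 0" "h > 0"
    and Q: "Q = s0*s2 - a\<^sup>2/s1"
    and mass: "(u1p - u1) + (u0p - u0) = h*(1/s2 - 1/s0)/\<tau>"
    and momentum: "(u1 - u0)/\<tau> + (Q - Qm)/h - B = 0"
    and bottom: "B*(\<tau>*(u1 + u0)) = bh - bc"
  shows "((u1\<^sup>2/2 + (s1+s2)/2 + a\<^sup>2/(2*s1*s2) - (bh+bm)/2)
          - (u0\<^sup>2/2 + (s0+s1)/2 + a\<^sup>2/(2*s0*s1) - (bm+bc)/2))/\<tau>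
       + ((u1p + u0p)/2*Q - (u1 + u0)/2*Qm)/h = 0"
proof -
  have u: "u1p + u0p = u1 + u0 + h*(1/s2 - 1/s0)/\<tau>" using mass by linarith
  have Qm: "Qm = Q + h*((u1 - u0)/\<tau> - B)" using momentum assms(5) by (simp add: field_simps)
  have bh: "bh = bc + B*(\<tau>*(u1 + u0))" using bottom by simp
  show ?thesis unfolding u Qm bh Q using assms(1-5)
    by (simp add: field_simps) (simp add: algebra_simps power2_eq_square)
qed

lemma Qf_eq:
  assumes "\<And>n k. p n k > 0"
    and "\<And>m. 2 / \<rho> (m-1) k = 1 / sqrt (p (m-1) k) + 1 / sqrt (p m k)"
  shows "Qf \<alpha> \<rho> p n k = sqrt (p (n-1) k) * sqrt (p (n+1) k) - \<alpha>\<^sup>2 / sqrt (p n k)"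
proof -
  have "4 / (\<rho> n k * \<rho> (n-1) k) - 2 / sqrt (p n k) * (1 / \<rho> n k + 1 / \<rho> (n-1) k)
      + 1 / (sqrt (p n k))\<^sup>2 = 1 / (sqrt (p (n-1) k) * sqrt (p (n+1) k))"
    by (rule harmonic_bracket_eq) (use assms(2)[of n] assms(2)[of "n+1"] in simp_all)
  moreover have "(sqrt (p n k))\<^sup>2 = p n k" using assms(1) by (simp add: less_imp_le)
  ultimately have "Qbr \<rho> p n k = 1 / (sqrt (p (n-1) k) * sqrt (p (n+1) k))"
    by (simp add: Qbr_def tbck_def)
  then show ?thesis by (simp add: Qf_def)
qed

lemma energy_eq:
  assumes "p n k > 0" "p (n+1) k > 0"
    and "2 / \<rho> n k = 1 / sqrt (p n k) + 1 / sqrt (p (n+1) k)"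
  shows "energy \<alpha> b \<rho> p u x n k = (u n k)\<^sup>2/2 + (sqrt (p n k) + sqrt (p (n+1) k))/2
           + \<alpha>\<^sup>2/(2 * sqrt (p n k) * sqrt (p (n+1) k)) - (b (x (n+1) k) + b (x n k))/2"
proof -
  have "p n k = (sqrt (p n k))\<^sup>2" using assms(1) by (simp add: less_imp_le)
  then show ?thesis
    unfolding energy_def tfwd_def
    using pressure_energy_eq[of "sqrt (p n k)" "sqrt (p (n+1) k)" "\<rho> n k" \<alpha>] assms by simp
qed

theorem mainTheorem12:
  fixes \<tau> h \<alpha> :: real and b :: "real \<Rightarrow> real" and \<rho> p u x Bc :: grid
  assumes "\<tau> > 0" and "h > 0"
    and "\<forall>n k. \<rho> n k > 0" and "\<forall>n k. p n k > 0"
    and "\<forall>n k. Qbr \<rho> p n k \<noteq> 0"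
    and "schemeM \<tau> h \<alpha> \<rho> p u x Bc"
    and "((\<exists>c. \<forall>y. b y = c) \<and> (\<forall>n k. Bc n k = 0))
       \<or> (\<forall>n k. u n k + tbck u n k \<noteq> 0
              \<and> Bc n k = (b (tfwd x n k) - b (tbck x n k)) / (\<tau> * (u n k + tbck u n k)))"
  shows "\<forall>n k. dtb \<tau> (energy \<alpha> b \<rho> p u x) n k + dsb h (eflux \<alpha> \<rho> p u) n k = 0"
proof (intro allI)
  fix n k
  note S = assms(6)[unfolded schemeM_def]
  have p_pos: "\<And>n k. p n k > 0" using assms(4) by blast
  have rho: "\<And>m. 2 / \<rho> (m-1) k = 1 / sqrt (p (m-1) k) + 1 / sqrt (p m k)"
    using S by (simp add: tbck_def)
  have mass: "(u n (k+1) - u n k) + (u (n-1) (k+1) - u (n-1) k)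
      = h * (1 / sqrt (p (n+1) k) - 1 / sqrt (p (n-1) k)) / \<tau>"
  proof (rule mass_scheme_velocity_jump)
    show "2 / \<rho> n k = 1 / sqrt (p n k) + 1 / sqrt (p (n+1) k)" using rho[of "n+1"] by simp
    show "(\<rho> n k - \<rho> (n-1) k)/\<tau> + 1/2 * \<rho> n k * \<rho> (n-1) k
        * (((u n (k+1) - u n k) + (u (n-1) (k+1) - u (n-1) k))/h) = 0"
      using S by (simp add: dtb_def ds_def tbck_def add_divide_distrib)
  qed (use rho[of n] assms(1-3) in \<open>auto simp: less_imp_neq[symmetric]\<close>)
  have momentum: "(u n k - u (n-1) k)/\<tau> + (Qf \<alpha> \<rho> p n k - Qf \<alpha> \<rho> p n (k-1))/h - Bc n k = 0"
    using S by (simp add: dtb_def dsb_def)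
  have bottom: "Bc n k * (\<tau> * (u n k + u (n-1) k)) = b (x (n+1) k) - b (x (n-1) k)"
    using assms(7) assms(1) by (auto simp: tbck_def tfwd_def)
  show "dtb \<tau> (energy \<alpha> b \<rho> p u x) n k + dsb h (eflux \<alpha> \<rho> p u) n k = 0"
    unfolding dtb_def dsb_def eflux_def sfwd_def tbck_def
    using discrete_energy_balance[OF _ _ _ assms(1,2)
        Qf_eq[where p=p and \<rho>=\<rho> and k=k and n=n, OF p_pos rho] mass momentum bottom]
      energy_eq[of p n k \<rho>] energy_eq[of p "n-1" k \<rho>] p_pos rho[of n] rho[of "n+1"]
    by simp
qed

end
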